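(* For every block $i\in\{1,\dots,N\}$ and battery state $\epsilon$: (1) For any H-channel state $\gamma_H$ for which $\alpha=1$ is optimal in block $i$ at some state $\langle\epsilon,\gamma_G,\gamma_H\rangle$, let $\Gamma_{G,i}(\epsilon,\gamma_H)$ be the largest G-channel state $\gamma_G$ for which $\alpha=1$ is optimal in block $i$ at $\langle\epsilon,\gamma_G,\gamma_H\rangle$. Then $u_i^*(\langle\epsilon,\gamma_G,\gamma_H\rangle)=u_i^*(\langle\epsilon,\Gamma_{G,i}(\epsilon,\gamma_H),\gamma_H\rangle)$ for all $\gamma_G\le\Gamma_{G,i}(\epsilon,\gamma_H)$. (2) For any G-channel state $\gamma_G$, let $\Gamma_{H,i}(\epsilon,\gamma_G)$ be the smallest H-channel state $\gamma_H$ for which $\alpha=1$ is optimal in block $i$ at $\langle\epsilon,\gamma_G,\gamma_H\rangle$, and suppose $\tilde\Gamma_{H,i}(\epsilon,\gamma_G)=\max\{H_k: H_k<\Gamma_{H,i}(\epsilon,\gamma_G)\}$ exists. Then $u_i^*(\langle\epsilon,\gamma_G,\gamma_H\rangle)=u_i^*(\langle\epsilon,\gamma_G,\tilde\Gamma_{H,i}(\epsilon,\gamma_G)\rangle)$ for all $\gamma_H\le\tilde\Gamma_{H,i}(\epsilon,\gamma_G)$.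
   Context: Finite-horizon MDP with $N$ blocks of length $\tau>0$. Parameters: $B_m>0$, positive integers $M,K$; channel levels $0<H_1<\dots<H_K$; $R,W,\sigma^2,g_0,\theta,d_G,d_H>0$; $p_G^{\max},p_H^{\max}>0$; weights $w_G,w_D>0$; $E_{H}$ a random variable with density $f_{E_H}$ on $[0,E_m]$. A state is $s=\langle\epsilon,\gamma_G,\gamma_H\rangle$ with $\epsilon\in\{(2m-1)B_m/(2M): m=1,\dots,M\}$ and $\gamma_G,\gamma_H\in\{H_1,\dots,H_K\}$. Let $p^{inv}_j(s)=(2^{R/(W\tau)}-1)\sigma^2(g_0 d_j^{-\theta}\gamma_j)^{-1}$ for $j\in\{G,H\}$, $\kappa=\min\{p_G^{\max},w_D(w_G\tau)^{-1}\}$, and $c(s)=w_D$ if $p^{inv}_G(s)>\kappa$, $c(s)=w_G p^{inv}_G(s)\tau$ otherwise. The allowable actions are $\mathcal{A}_s=\{0\}$ if $p^{inv}_H(s)>\min\{\epsilon/\tau,p_H^{\max}\}$ and $\mathcal{A}_s=\{0,1\}$ otherwise; the cost is $c(s,\alpha)=(1-\alpha)c(s)$. Transitions: given $s$ and $\alpha$, the next channel states $\gamma_G',\gamma_H'$ are independent, each uniform on $\{H_1,\dots,H_K\}$, independent of the next energy state $\epsilon'=Q(\epsilon-\alpha p^{inv}_H(s)\tau+E_H)$, where $Q(\varepsilon)=\big(2\min\{\lfloor M\min\{\varepsilon,B_m\}/B_m\rfloor+1,M\}-1\big)B_m/(2M)$; denote the resulting transition probability $p(s'|s,\alpha)$.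 Optimal cost-to-go functions: $u_N^*(s)=\min_{\alpha\in\mathcal{A}_s}c(s,\alpha)$ and, for $i<N$, $u_i^*(s)=\min_{\alpha\in\mathcal{A}_s}\{c(s,\alpha)+\sum_{s'}p(s'|s,\alpha)u_{i+1}^*(s')\}$. Action $\alpha$ is optimal in block $i$ at state $s$ if $\alpha\in\mathcal{A}_s$ and it attains the minimum in the defining equation of $u_i^*(s)$. *)

theory Defs
  imports "HOL-Analysis.Analysis"
begin

record mdp =
  nN     :: nat
  tau    :: real           (* block length *)
  Bmax   :: real
  nM     :: nat            (* number of battery levels M *)
  nK     :: nat            (* number of channel levels K *)
  Hlev   :: "nat \<Rightarrow> real"
  rate   :: real
  bw     :: real
  sigma2 :: real
  g0     :: real
  theta  :: real
  dG     :: real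
  dH     :: real
  pGmax  :: real
  pHmax  :: real
  wG     :: real
  wD     :: real
  Em     :: real           (* support [0, E_m] of E_H *)
  fEH    :: "real \<Rightarrow> real"  (* density of E_H on [0, E_m] *)

definition mdp_params :: "mdp \<Rightarrow> bool" where
  "mdp_params P \<longleftrightarrow>
     nN P \<ge> 1 \<and> tau P > 0 \<and> Bmax P > 0 \<and> nM P \<ge> 1 \<and> nK P \<ge> 1 \<and>
     0 < Hlev P 1 \<and> (\<forall>k\<in>{1..nK P}. \<forall>l\<in>{1..nK P}. k < l \<longrightarrow> Hlev P k < Hlev P l) \<and>
     rate P > 0 \<and> bw P > 0 \<and> sigma2 P > 0 \<and> g0 P > 0 \<and> theta P > 0 \<and>
     dG P > 0 \<and> dH P > 0 \<and> pGmax P > 0 \<and> pHmax P > 0 \<and> wG P > 0 \<and> wD P > 0 \<and>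
     Em P > 0 \<and> (\<forall>t\<in>{0..Em P}. fEH P t \<ge> 0) \<and>
     fEH P integrable_on {0..Em P} \<and> integral {0..Em P} (fEH P) = 1"

type_synonym state = "real \<times> real \<times> real"

definition chan_levels :: "mdp \<Rightarrow> real set" where
  "chan_levels P = Hlev P ` {1..nK P}"

definition batt_levels :: "mdp \<Rightarrow> real set" where
  "batt_levels P = (\<lambda>m. (2 * real m - 1) * Bmax P / (2 * real (nM P))) ` {1..nM P}"

definition states :: "mdp \<Rightarrow> state set" where
  "states P = batt_levels P \<times> chan_levels P \<times> chan_levels P"

definition eps :: "state \<Rightarrow> real" where "eps s = fst s"
definition gamG :: "state \<Rightarrow> real" where "gamG s = fst (snd s)"
definition gamH :: "state \<Rightarrow> real" where "gamH s = snd (snd s)"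

definition pinvG :: "mdp \<Rightarrow> state \<Rightarrow> real" where
  "pinvG P s = (2 powr (rate P / (bw P * tau P)) - 1) * sigma2 P
                 * inverse (g0 P * dG P powr (- theta P) * gamG s)"

definition pinvH :: "mdp \<Rightarrow> state \<Rightarrow> real" where
  "pinvH P s = (2 powr (rate P / (bw P * tau P)) - 1) * sigma2 P
                 * inverse (g0 P * dH P powr (- theta P) * gamH s)"

definition kappa :: "mdp \<Rightarrow> real" where
  "kappa P = min (pGmax P) (wD P * inverse (wG P * tau P))"

definition cst :: "mdp \<Rightarrow> state \<Rightarrow> real" where
  "cst P s = (if pinvG P s > kappa P then wD P else wG P * pinvG P s * tau P)"

definition actions :: "mdp \<Rightarrow> state \<Rightarrow> nat set" where
  "actions P s = (if pinvH P s > min (eps s / tau P) (pHmax P) then {0} else {0, 1})"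

definition cost :: "mdp \<Rightarrow> state \<Rightarrow> nat \<Rightarrow> real" where
  "cost P s a = (1 - real a) * cst P s"

definition quant :: "mdp \<Rightarrow> real \<Rightarrow> real" where
  "quant P x = (2 * min (real_of_int \<lfloor>real (nM P) * min x (Bmax P) / Bmax P\<rfloor> + 1) (real (nM P)) - 1)
                 * Bmax P / (2 * real (nM P))"

text \<open>Probability that \<open>Q(x + E_H) = e'\<close>, with \<open>E_H\<close> having density \<open>fEH\<close> on \<open>[0, E_m]\<close>.\<close>

definition energy_prob :: "mdp \<Rightarrow> real \<Rightarrow> real \<Rightarrow> real" where
  "energy_prob P x e' = integral {0..Em P} (\<lambda>t. if quant P (x + t) = e' then fEH P t else 0)"

text \<open>Transition probability \<open>p(s'|s,\<alpha>)\<close>: channels i.i.d. uniform, independent of energy.\<close>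

definition ptrans :: "mdp \<Rightarrow> state \<Rightarrow> state \<Rightarrow> nat \<Rightarrow> real" where
  "ptrans P s' s a =
     (if gamG s' \<in> chan_levels P \<and> gamH s' \<in> chan_levels P
      then (1 / real (nK P)) * (1 / real (nK P))
           * energy_prob P (eps s - real a * pinvH P s * tau P) (eps s')
      else 0)"

text \<open>Optimal cost-to-go, indexed by the number of remaining stages:
  \<open>ustar_rem P k = u^*_{N-k}\<close>.\<close>

fun ustar_rem :: "mdp \<Rightarrow> nat \<Rightarrow> state \<Rightarrow> real" where
  "ustar_rem P 0 s = Min ((\<lambda>a. cost P s a) ` actions P s)"
| "ustar_rem P (Suc k) s =
     Min ((\<lambda>a. cost P s a + (\<Sum>s'\<in>states P. ptrans P s' s a * ustar_rem P k s')) ` actions P s)"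

definition ustar :: "mdp \<Rightarrow> nat \<Rightarrow> state \<Rightarrow> real" where
  "ustar P i s = ustar_rem P (nN P - i) s"

text \<open>The quantity minimised in the defining equation of \<open>u^*_i(s)\<close>.\<close>

definition qval :: "mdp \<Rightarrow> nat \<Rightarrow> state \<Rightarrow> nat \<Rightarrow> real" where
  "qval P i s a = (if i = nN P then cost P s a
                   else cost P s a + (\<Sum>s'\<in>states P. ptrans P s' s a * ustar P (i + 1) s'))"

definition optimal_action :: "mdp \<Rightarrow> nat \<Rightarrow> state \<Rightarrow> nat \<Rightarrow> bool" where
  "optimal_action P i s a \<longleftrightarrow> a \<in> actions P s \<and> qval P i s a = ustar P i s"

end

theory Submission
  imports Defs
begin

text \<open>Neither the allowable actions nor the value of transmitting over H (\<open>\<alpha> = 1\<close>) depend on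
  \<open>\<gamma>_G\<close>, while the value of \<open>\<alpha> = 0\<close> depends on \<open>\<gamma>_G\<close> only through the immediate cost \<open>c(s)\<close>,
  which is antitone in \<open>\<gamma>_G\<close>. Hence optimality of \<open>\<alpha> = 1\<close> propagates downwards in \<open>\<gamma>_G\<close>, and
  below \<open>\<Gamma>_{G,i}\<close> the optimal cost is the common value of \<open>\<alpha> = 1\<close>. Dually, the value of
  \<open>\<alpha> = 0\<close> does not depend on \<open>\<gamma>_H\<close>, and below \<open>\<Gamma>_{H,i}\<close> only \<open>\<alpha> = 0\<close> is optimal.\<close>

lemma actions_subset: "actions P s \<subseteq> {0, 1}"
  and zero_in_actions: "0 \<in> actions P s"
  by (auto simp: actions_def)

lemma ustar_eq_Min_qval:
  assumes "i \<in> {1..nN P}"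
  shows "ustar P i s = Min (qval P i s ` actions P s)"
proof (cases "i = nN P")
  case True
  then show ?thesis by (simp add: ustar_def qval_def)
next
  case False
  then have "nN P - i = Suc (nN P - (i + 1))" using assms by auto
  then show ?thesis using False by (simp add: ustar_def qval_def)
qed

lemma ustar_eq_qval_0_or_1:
  assumes "i \<in> {1..nN P}"
  shows "ustar P i s = (if 1 \<in> actions P s then min (qval P i s 0) (qval P i s 1)
                        else qval P i s 0)"
proof -
  have "actions P s = (if 1 \<in> actions P s then {0, 1} else {0})"
    using actions_subset[of P s] zero_in_actions[of P s] by auto
  then show ?thesis
    unfolding ustar_eq_Min_qval[OF assms] by (cases "1 \<in> actions P s") (auto simp: min_def)
qed

lemma optimal_action_1_iff:
  assumes "i \<in> {1..nN P}"
  shows "optimal_action P i s 1 \<longleftrightarrow> 1 \<in> actions P s \<and> qval P i s 1 \<le> qval P i s 0"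
  using ustar_eq_qval_0_or_1[OF assms, of s] by (auto simp: optimal_action_def min_def)

lemma ustar_eq_qval_0_if_not_optimal_1:
  assumes "i \<in> {1..nN P}" "\<not> optimal_action P i s 1"
  shows "ustar P i s = qval P i s 0"
  using assms ustar_eq_qval_0_or_1[OF assms(1), of s] optimal_action_1_iff[OF assms(1), of s]
  by (auto simp: min_def)

lemma ustar_eq_qval_1_if_optimal_1:
  assumes "optimal_action P i s 1"
  shows "ustar P i s = qval P i s 1"
  using assms by (simp add: optimal_action_def)

lemma actions_indep_gamG: "actions P (e, gG, gH) = actions P (e, gG', gH)"
  by (simp add: actions_def eps_def pinvH_def gamH_def)

lemma qval_1_indep_gamG: "qval P i (e, gG, gH) 1 = qval P i (e, gG', gH) 1"
proof -
  have "ptrans P s' (e, gG, gH) 1 = ptrans P s' (e, gG', gH) 1" for s'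
    by (simp add: ptrans_def eps_def pinvH_def gamH_def)
  then show ?thesis by (simp add: qval_def cost_def)
qed

lemma qval_0_minus_cst_indep_gamG:
  "qval P i (e, gG, gH) 0 - cst P (e, gG, gH) = qval P i (e, gG', gH) 0 - cst P (e, gG', gH)"
proof -
  have "ptrans P s' (e, gG, gH) 0 = ptrans P s' (e, gG', gH) 0" for s'
    by (simp add: ptrans_def eps_def)
  then show ?thesis by (simp add: qval_def cost_def)
qed

lemma qval_0_indep_gamH: "qval P i (e, gG, gH) 0 = qval P i (e, gG, gH') 0"
proof -
  have "ptrans P s' (e, gG, gH) 0 = ptrans P s' (e, gG, gH') 0" for s'
    by (simp add: ptrans_def eps_def)
  then show ?thesis by (simp add: qval_def cost_def cst_def pinvG_def gamG_def)
qed

lemma finite_chan_levels: "finite (chan_levels P)"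
  by (simp add: chan_levels_def)

lemma chan_levels_pos:
  assumes "mdp_params P" "g \<in> chan_levels P"
  shows "g > 0"
proof -
  obtain k where k: "k \<in> {1..nK P}" "g = Hlev P k"
    using assms(2) by (auto simp: chan_levels_def)
  have "Hlev P 1 \<le> Hlev P k"
  proof (cases "k = 1")
    case False
    then have "1 < k" using k(1) by simp
    then show ?thesis using assms(1) k(1) unfolding mdp_params_def
      by (meson atLeastAtMost_iff less_imp_le order.refl)
  qed simp
  then show ?thesis using assms(1) k by (simp add: mdp_params_def)
qed

lemma pinvG_antimono:
  assumes "mdp_params P" "0 < g1" "g1 \<le> g2"
  shows "pinvG P (e, g2, h) \<le> pinvG P (e', g1, h')"
proof -
  have "2 powr (rate P / (bw P * tau P)) > 1"
    using assms(1) by (simp add: mdp_params_def)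
  then have num_pos: "(2 powr (rate P / (bw P * tau P)) - 1) * sigma2 P > 0"
    using assms(1) by (simp add: mdp_params_def)
  have "g0 P * dG P powr (- theta P) > 0" using assms(1) by (simp add: mdp_params_def)
  then have "inverse (g0 P * dG P powr (- theta P) * g2) \<le> inverse (g0 P * dG P powr (- theta P) * g1)"
    using assms(2,3) by (intro le_imp_inverse_le mult_left_mono) auto
  then show ?thesis using num_pos unfolding pinvG_def gamG_def by (simp add: mult_left_mono)
qed

lemma cst_mono_pinvG:
  assumes "mdp_params P" "pinvG P s \<le> pinvG P s'"
  shows "cst P s \<le> cst P s'"
proof -
  have wt: "wG P * tau P > 0" using assms(1) by (simp add: mdp_params_def)
  have below_kappa: "wG P * x * tau P \<le> wD P" if "x \<le> kappa P" for x
  proof -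
    have "x \<le> wD P / (wG P * tau P)" using that by (simp add: kappa_def divide_inverse)
    then show ?thesis using wt by (simp add: pos_le_divide_eq algebra_simps)
  qed
  have "wG P * pinvG P s * tau P \<le> wG P * pinvG P s' * tau P"
    using assms by (simp add: mdp_params_def mult_left_mono mult_right_mono)
  then show ?thesis
    unfolding cst_def using below_kappa[of "pinvG P s"] assms(2) by auto
qed

lemma optimal_action_1_downward_gamG:
  assumes "mdp_params P" "i \<in> {1..nN P}" "optimal_action P i (e, g2, gH) 1" "0 < g1" "g1 \<le> g2"
  shows "optimal_action P i (e, g1, gH) 1"
proof -
  have "cst P (e, g2, gH) \<le> cst P (e, g1, gH)"
    using assms(1,4,5) by (intro cst_mono_pinvG pinvG_antimono)
  moreover have "qval P i (e, g2, gH) 1 \<le> qval P i (e, g2, gH) 0"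
    and "1 \<in> actions P (e, g2, gH)"
    using assms(3) optimal_action_1_iff[OF assms(2)] by auto
  ultimately show ?thesis
    using optimal_action_1_iff[OF assms(2)] actions_indep_gamG[of P e g1 gH g2]
      qval_1_indep_gamG[of P i e g1 gH g2] qval_0_minus_cst_indep_gamG[of P i e g2 gH g1]
    by auto
qed

lemma ustar_const_below_optimal_gamG:
  assumes "mdp_params P" "i \<in> {1..nN P}" "optimal_action P i (e, g2, gH) 1"
    and "g1 \<in> chan_levels P" "g1 \<le> g2"
  shows "ustar P i (e, g1, gH) = ustar P i (e, g2, gH)"
proof -
  have "optimal_action P i (e, g1, gH) 1"
    using assms chan_levels_pos by (blast intro: optimal_action_1_downward_gamG)
  then show ?thesis
    using assms(3) qval_1_indep_gamG ustar_eq_qval_1_if_optimal_1 by metis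
qed

lemma ustar_eq_if_not_optimal_1:
  assumes "i \<in> {1..nN P}"
    and "\<not> optimal_action P i (e, gG, h1) 1" "\<not> optimal_action P i (e, gG, h2) 1"
  shows "ustar P i (e, gG, h1) = ustar P i (e, gG, h2)"
  using assms ustar_eq_qval_0_if_not_optimal_1 qval_0_indep_gamH by metis

theorem proposition4:
  fixes P :: mdp and i :: nat and e :: real
  assumes "mdp_params P"
    and "i \<in> {1..nN P}"
    and "e \<in> batt_levels P"
  shows "(\<forall>gH\<in>chan_levels P.
            (\<exists>gG\<in>chan_levels P. optimal_action P i (e, gG, gH) 1) \<longrightarrow>
            (let GamG = Max {gG \<in> chan_levels P. optimal_action P i (e, gG, gH) 1}
             in \<forall>gG\<in>chan_levels P. gG \<le> GamG \<longrightarrow>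
                  ustar P i (e, gG, gH) = ustar P i (e, GamG, gH)))
       \<and> (\<forall>gG\<in>chan_levels P.
            (\<exists>gH\<in>chan_levels P. optimal_action P i (e, gG, gH) 1) \<longrightarrow>
            (let GamH = Min {gH \<in> chan_levels P. optimal_action P i (e, gG, gH) 1}
             in (\<exists>h\<in>chan_levels P. h < GamH) \<longrightarrow>
                (let GamHt = Max {h \<in> chan_levels P. h < GamH}
                 in \<forall>gH\<in>chan_levels P. gH \<le> GamHt \<longrightarrow>
                      ustar P i (e, gG, gH) = ustar P i (e, gG, GamHt))))"
proof (unfold Let_def, intro conjI ballI impI)
  fix gH gG
  let ?GamG = "Max {gG \<in> chan_levels P. optimal_action P i (e, gG, gH) 1}"
  assume "\<exists>gG\<in>chan_levels P. optimal_action P i (e, gG, gH) 1"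
  then have "?GamG \<in> {gG \<in> chan_levels P. optimal_action P i (e, gG, gH) 1}"
    using finite_chan_levels by (intro Max_in) auto
  moreover assume "gG \<in> chan_levels P" "gG \<le> ?GamG"
  ultimately show "ustar P i (e, gG, gH) = ustar P i (e, ?GamG, gH)"
    using assms(1,2) ustar_const_below_optimal_gamG by blast
next
  fix gG gH
  let ?GamH = "Min {gH \<in> chan_levels P. optimal_action P i (e, gG, gH) 1}"
  let ?GamHt = "Max {h \<in> chan_levels P. h < ?GamH}"
  have not_opt: "\<not> optimal_action P i (e, gG, h) 1" if "h \<in> chan_levels P" "h < ?GamH" for h
  proof
    assume "optimal_action P i (e, gG, h) 1"
    then have "?GamH \<le> h" using that(1) finite_chan_levels by simp
    then show False using that(2) by simp
  qed
  assume "\<exists>h\<in>chan_levels P. h < ?GamH"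
  then have "?GamHt \<in> {h \<in> chan_levels P. h < ?GamH}"
    using finite_chan_levels by (intro Max_in) auto
  moreover assume "gH \<in> chan_levels P" "gH \<le> ?GamHt"
  ultimately show "ustar P i (e, gG, gH) = ustar P i (e, gG, ?GamHt)"
    using not_opt ustar_eq_if_not_optimal_1[OF assms(2)] by fastforce
qed

end
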